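(* Let $\mathcal{P}$ be a poset with at least two elements having the Unique Cover Twin Property, let $n\ge 3$, and let $\mathcal{F}$ be an induced-$\mathcal{P}$-saturated family in $\mathcal{B}_n$. If there exist distinct $x,y\in[n]$ such that no $F\in\mathcal{F}$ satisfies $|F\cap\{x,y\}|=1$, then $\{x,y\}\subseteq F$ for all $F\in\mathcal{F}$.
   Context: In a poset $(P,\le)$, $y$ covers $x$ if $x<y$ and there is no $z$ with $x<z<y$. A poset $\mathcal{P}=(P,\le)$ has the Unique Cover Twin Property (UCTP) if for every $S\in P$ that has exactly one cover $T\in P$, there exists $S'\in P$ with $S'\ne S$ such that $T$ also covers $S'$. $\mathcal{B}_n$ denotes the Boolean lattice $(2^{[n]},\subseteq)$. A family $\mathcal{F}\subseteq 2^{[n]}$ (ordered by inclusion) is induced-$\mathcal{P}$-saturated if it contains no induced copy of $\mathcal{P}$ (an injection $f$ with $u\le v\iff f(u)\subseteq f(v)$) but every family $\mathcal{F}'$ with $\mathcal{F}\subsetneq\mathcal{F}'\subseteq 2^{[n]}$ contains one. *)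

theory Defs
  imports Main
begin

definition is_poset :: "'a set \<Rightarrow> ('a \<Rightarrow> 'a \<Rightarrow> bool) \<Rightarrow> bool" where
  "is_poset P le \<longleftrightarrow>
     (\<forall>x\<in>P. le x x) \<and>
     (\<forall>x\<in>P. \<forall>y\<in>P. le x y \<and> le y x \<longrightarrow> x = y) \<and>
     (\<forall>x\<in>P. \<forall>y\<in>P. \<forall>z\<in>P. le x y \<and> le y z \<longrightarrow> le x z)"

definition covers :: "'a set \<Rightarrow> ('a \<Rightarrow> 'a \<Rightarrow> bool) \<Rightarrow> 'a \<Rightarrow> 'a \<Rightarrow> bool" where
  "covers P le y x \<longleftrightarrow>
     x \<in> P \<and> y \<in> P \<and> le x y \<and> x \<noteq> y \<and>
     \<not> (\<exists>z\<in>P. le x z \<and> z \<noteq> x \<and> le z y \<and> z \<noteq> y)"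

definition UCTP :: "'a set \<Rightarrow> ('a \<Rightarrow> 'a \<Rightarrow> bool) \<Rightarrow> bool" where
  "UCTP P le \<longleftrightarrow>
     (\<forall>S\<in>P. \<forall>T\<in>P. (covers P le T S \<and> (\<forall>T'\<in>P. covers P le T' S \<longrightarrow> T' = T))
        \<longrightarrow> (\<exists>S'\<in>P. S' \<noteq> S \<and> covers P le T S'))"

definition contains_induced_copy ::
  "'a set \<Rightarrow> ('a \<Rightarrow> 'a \<Rightarrow> bool) \<Rightarrow> 'b set set \<Rightarrow> bool" where
  "contains_induced_copy P le Fam \<longleftrightarrow>
     (\<exists>f. inj_on f P \<and> f ` P \<subseteq> Fam \<and>
          (\<forall>u\<in>P. \<forall>v\<in>P. le u v \<longleftrightarrow> f u \<subseteq> f v))"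

definition induced_saturated ::
  "'a set \<Rightarrow> ('a \<Rightarrow> 'a \<Rightarrow> bool) \<Rightarrow> nat \<Rightarrow> nat set set \<Rightarrow> bool" where
  "induced_saturated P le n Fam \<longleftrightarrow>
     Fam \<subseteq> Pow {1..n} \<and>
     \<not> contains_induced_copy P le Fam \<and>
     (\<forall>Fam'. Fam \<subset> Fam' \<and> Fam' \<subseteq> Pow {1..n} \<longrightarrow> contains_induced_copy P le Fam')"

end

theory Submission
  imports Defs
begin

text \<open>Suppose some member
avoids both, and let G be a maximal one. Then G \<union> {x} is not in the family, so by
saturation adding it creates an induced copy f of P, with G \<union> {x} = f S. Since members
never contain exactly one of x, y, the members below G \<union> {x} are exactly those below G.
If G is not used by the copy, replacing G \<union> {x} by G yields a copy inside the family.
Otherwise G = f S0, and by maximality of G the members strictly above G contain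
G \<union> {x}; so S0 has S as its unique cover, while S covers nothing but S0,
contradicting the Unique Cover Twin Property.\<close>

lemma pair_membership_iff:
  assumes "card (F \<inter> {x, y}) \<noteq> 1" "x \<noteq> y"
  shows "x \<in> F \<longleftrightarrow> y \<in> F"
  using assms by (cases "x \<in> F"; cases "y \<in> F"; auto simp: Int_insert_right)

lemma subset_insert_iff_of_paired:
  assumes "x \<in> F \<longleftrightarrow> y \<in> F" "y \<notin> G" "x \<noteq> y"
  shows "F \<subseteq> insert x G \<longleftrightarrow> F \<subseteq> G"
  using assms by auto

lemma induced_saturated_insert:
  assumes "induced_saturated P le n Fam" "N \<subseteq> {1..n}" "N \<notin> Fam"
  shows "contains_induced_copy P le (insert N Fam)"
  using assms unfolding induced_saturated_def by (simp add: psubset_insert_iff)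

lemma finite_has_maximal_avoiding:
  assumes "finite Fam" "F \<in> Fam" "x \<notin> F"
  obtains G where "G \<in> Fam" "x \<notin> G" "\<forall>F\<in>Fam. G \<subseteq> F \<and> x \<notin> F \<longrightarrow> F = G"
  using finite_has_maximal[of "{F\<in>Fam. x \<notin> F}"] assms by auto

lemma induced_copy_through_new_set:
  assumes "\<not> contains_induced_copy P le Fam"
    and "contains_induced_copy P le (insert N Fam)"
  obtains f S where "inj_on f P" "\<forall>u\<in>P. \<forall>v\<in>P. le u v \<longleftrightarrow> f u \<subseteq> f v"
    "S \<in> P" "f S = N" "\<forall>Z\<in>P - {S}. f Z \<in> Fam"
proof -
  obtain f where f: "inj_on f P" "f ` P \<subseteq> insert N Fam" "\<forall>u\<in>P. \<forall>v\<in>P. le u v \<longleftrightarrow> f u \<subseteq> f v"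
    using assms(2) unfolding contains_induced_copy_def by blast
  have "N \<in> f ` P"
    using assms(1) f unfolding contains_induced_copy_def by blast
  then obtain S where "S \<in> P" "f S = N" by blast
  moreover have "\<forall>Z\<in>P - {S}. f Z \<in> Fam"
    using f(1,2) \<open>S \<in> P\<close> \<open>f S = N\<close> by (metis DiffE image_subset_iff inj_onD insertE singletonI)
  ultimately show thesis using that f(1,3) by blast
qed

lemma induced_embedding_fun_upd:
  assumes inj: "inj_on f P" and emb: "\<forall>u\<in>P. \<forall>v\<in>P. le u v \<longleftrightarrow> f u \<subseteq> f v"
    and "B \<notin> f ` P"
    and same_position: "\<forall>Z\<in>P - {S}. (f Z \<subseteq> f S \<longleftrightarrow> f Z \<subseteq> B) \<and> (f S \<subseteq> f Z \<longleftrightarrow> B \<subseteq> f Z)"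
  shows "inj_on (f(S := B)) P" "\<forall>u\<in>P. \<forall>v\<in>P. le u v \<longleftrightarrow> (f(S := B)) u \<subseteq> (f(S := B)) v"
proof -
  show "inj_on (f(S := B)) P"
    using inj \<open>B \<notin> f ` P\<close> unfolding inj_on_def by (auto split: if_splits)
  show "\<forall>u\<in>P. \<forall>v\<in>P. le u v \<longleftrightarrow> (f(S := B)) u \<subseteq> (f(S := B)) v"
    using emb same_position by auto
qed

text \<open>S is the unique upper cover of S0, and any twin of S0 below S would lie below S0.\<close>

lemma UCTP_no_isolated_cover_pair:
  assumes "is_poset P le" "UCTP P le"
    and "S0 \<in> P" "S \<in> P" "le S0 S" "S0 \<noteq> S"
    and below: "\<forall>Z\<in>P. le Z S \<and> Z \<noteq> S \<longrightarrow> le Z S0"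
    and above: "\<forall>T\<in>P. le S0 T \<and> T \<noteq> S0 \<longrightarrow> le S T"
  shows False
proof -
  have antisym: "\<And>u v. u \<in> P \<Longrightarrow> v \<in> P \<Longrightarrow> le u v \<Longrightarrow> le v u \<Longrightarrow> u = v"
    and trans: "\<And>u v w. u \<in> P \<Longrightarrow> v \<in> P \<Longrightarrow> w \<in> P \<Longrightarrow> le u v \<Longrightarrow> le v w \<Longrightarrow> le u w"
    using assms(1) unfolding is_poset_def by blast+
  have cover: "covers P le S S0"
    unfolding covers_def using assms(3-6) below above antisym trans by metis
  have unique: "\<forall>T\<in>P. covers P le T S0 \<longrightarrow> T = S"
    using above assms(4-6) unfolding covers_def by blast
  obtain S' where "S' \<in> P" "S' \<noteq> S0" "covers P le S S'"
    using assms(2-4) cover unique unfolding UCTP_def by blast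
  then show False
    using below assms(3,5,6) unfolding covers_def by blast
qed

locale copy_through_pair_extension =
  fixes P :: "'a set" and le :: "'a \<Rightarrow> 'a \<Rightarrow> bool" and f :: "'a \<Rightarrow> 'b set"
    and S :: 'a and Fam :: "'b set set" and x y :: 'b and G :: "'b set"
  assumes inj: "inj_on f P" and emb: "\<forall>u\<in>P. \<forall>v\<in>P. le u v \<longleftrightarrow> f u \<subseteq> f v"
    and S: "S \<in> P" "f S = insert x G" and others: "\<forall>Z\<in>P - {S}. f Z \<in> Fam"
    and paired: "\<forall>F\<in>Fam. x \<in> F \<longleftrightarrow> y \<in> F" and distinct: "x \<noteq> y"
    and avoids: "x \<notin> G" "y \<notin> G" and maximal: "\<forall>F\<in>Fam. G \<subseteq> F \<and> x \<notin> F \<longrightarrow> F = G"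
begin

lemma below_new_set_iff:
  assumes "Z \<in> P - {S}"
  shows "f Z \<subseteq> f S \<longleftrightarrow> f Z \<subseteq> G"
proof -
  have "x \<in> f Z \<longleftrightarrow> y \<in> f Z"
    using paired others assms by simp
  then show ?thesis
    using subset_insert_iff_of_paired[of x "f Z" y G] S(2) distinct avoids(2) by simp
qed

lemma above_maximal_member:
  assumes "Z \<in> P - {S}" "G \<subseteq> f Z" "f Z \<noteq> G"
  shows "f S \<subseteq> f Z"
proof -
  have "x \<in> f Z"
    using maximal[rule_format, of "f Z"] others assms by auto
  then show ?thesis
    using S(2) assms(2) by simp
qed

lemma induced_copy_replacing_new_set:
  assumes "G \<in> Fam" "G \<notin> f ` P"
  shows "contains_induced_copy P le Fam"
proof -
  have "\<forall>Z\<in>P - {S}. (f Z \<subseteq> f S \<longleftrightarrow> f Z \<subseteq> G) \<and> (f S \<subseteq> f Z \<longleftrightarrow> G \<subseteq> f Z)"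
  proof
    fix Z assume Z: "Z \<in> P - {S}"
    then have "f Z \<noteq> G"
      using assms(2) by auto
    then show "(f Z \<subseteq> f S \<longleftrightarrow> f Z \<subseteq> G) \<and> (f S \<subseteq> f Z \<longleftrightarrow> G \<subseteq> f Z)"
      using below_new_set_iff above_maximal_member Z S(2) by auto
  qed
  note copy = induced_embedding_fun_upd[OF inj emb assms(2) this]
  have "(f(S := G)) ` P \<subseteq> Fam"
    using others assms(1) by auto
  then show ?thesis
    using copy unfolding contains_induced_copy_def by blast
qed

lemma maximal_member_not_in_copy:
  assumes "is_poset P le" "UCTP P le" and S0: "S0 \<in> P" "f S0 = G"
  shows False
proof -
  have below: "\<forall>Z\<in>P. le Z S \<and> Z \<noteq> S \<longrightarrow> le Z S0"
    using below_new_set_iff emb S S0 by auto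
  have above: "\<forall>T\<in>P. le S0 T \<and> T \<noteq> S0 \<longrightarrow> le S T"
  proof (intro ballI impI)
    fix T assume T: "T \<in> P" "le S0 T \<and> T \<noteq> S0"
    then have "G \<subseteq> f T" "f T \<noteq> G"
      using emb inj S0 inj_onD[OF inj, of T S0] by auto
    then show "le S T"
      using above_maximal_member[of T] emb T S by (cases "T = S") auto
  qed
  have "S0 \<noteq> S" "le S0 S"
    using S S0 emb avoids(1) by auto
  then show False
    using UCTP_no_isolated_cover_pair[OF assms(1,2) S0(1) S(1)] below above by blast
qed

end

theorem lemma3p8:
  fixes P :: "'a set" and le :: "'a \<Rightarrow> 'a \<Rightarrow> bool"
    and n :: nat and Fam :: "nat set set" and x y :: nat
  assumes "is_poset P le" and "finite P" and "card P \<ge> 2"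
    and "UCTP P le"
    and "n \<ge> 3"
    and "induced_saturated P le n Fam"
    and "x \<in> {1..n}" and "y \<in> {1..n}" and "x \<noteq> y"
    and "\<forall>F\<in>Fam. card (F \<inter> {x, y}) \<noteq> 1"
  shows "\<forall>F\<in>Fam. {x, y} \<subseteq> F"
proof (rule ccontr)
  assume not_all: "\<not> ?thesis"
  have paired: "\<forall>F\<in>Fam. x \<in> F \<longleftrightarrow> y \<in> F"
    using pair_membership_iff[OF bspec[OF assms(10)] assms(9)] by simp
  have Fam_sub: "Fam \<subseteq> Pow {1..n}" and no_copy: "\<not> contains_induced_copy P le Fam"
    using assms(6) unfolding induced_saturated_def by auto
  have "finite Fam"
    using Fam_sub finite_subset by blast
  moreover obtain F where "F \<in> Fam" "x \<notin> F"
    using not_all paired by auto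
  ultimately obtain G where G: "G \<in> Fam" "x \<notin> G"
    and maximal: "\<forall>F\<in>Fam. G \<subseteq> F \<and> x \<notin> F \<longrightarrow> F = G"
    by (rule finite_has_maximal_avoiding)
  have "y \<notin> G" "insert x G \<notin> Fam"
    using bspec[OF paired, of G] bspec[OF paired, of "insert x G"] G assms(9) by auto
  then have "contains_induced_copy P le (insert (insert x G) Fam)"
    using induced_saturated_insert[OF assms(6)] G(1) Fam_sub assms(7) by auto
  then obtain f S where "inj_on f P" "\<forall>u\<in>P. \<forall>v\<in>P. le u v \<longleftrightarrow> f u \<subseteq> f v"
    "S \<in> P" "f S = insert x G" "\<forall>Z\<in>P - {S}. f Z \<in> Fam"
    using induced_copy_through_new_set[OF no_copy] by blast
  then interpret copy_through_pair_extension P le f S Fam x y G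
    using paired assms(9) G \<open>y \<notin> G\<close> maximal by unfold_locales
  show False
    using induced_copy_replacing_new_set maximal_member_not_in_copy assms(1,4) no_copy G(1) by blast
qed

end
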